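(* Let $(C';\pi')$ be a condensation of the constrained clause $(C;\pi)$, and let $\prec$ be an atom ordering. Then (i) $(C;\pi)\models(C';\pi')$, i.e. every Herbrand interpretation satisfying $(C;\pi)$ satisfies $(C';\pi')$; and (ii) $(C;\pi)$ is redundant in $\{(C';\pi')\}$.
   Context: A clause $C$ is a finite multiset of literals, written $\Gamma\rightarrow\Delta$ with $\Gamma$ the atoms of negative and $\Delta$ the atoms of positive literals. A (straight dismatching) constraint $\pi=\bigwedge_{i\in I}t_i\neq s_i$ is a finite conjunction of disequations between variable-disjoint terms with $s_i$ straight (a variable or constant is straight; $f(s_1,\dots,s_n)$ is straight if the $s_j$ are pairwise distinct variables except for at most one straight argument); for a substitution $\sigma$, $\pi\sigma=\bigwedge_i t_i\sigma\neq s_i$; we regard $\pi$ as the set of its conjuncts when writing $\pi'\subseteq\pi$. A solution of $\pi$ is a grounding substitution $\delta$ such that no $t_i\delta$ is an instance of $s_i$. A constrained clause is a pair $(C;\pi)$; its ground instances $\mathrm{ground}((C;\pi))$ are the clauses $C\delta$ with $\delta$ a solution of $\pi$ grounding all variables of $C$ and of the $t_i$; $\mathrm{ground}(N)$ is the union over a set $N$. A Herbrand interpretation $I$ (a set of ground atoms) satisfies a ground clause $\Gamma\rightarrow\Delta$ if $\Delta\cap I\neq\emptyset$ or $\Gamma\not\subseteq I$, and satisfies $(C;\pi)$ if it satisfies all its ground instances. An atom ordering $\prec$ is an irreflexive, well-founded, total ordering on ground atoms, lifted to literals by representing $A$ as $\{A\}$ and $\neg A$ as $\{A,A\}$ with the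 multiset extension, and to ground clauses by the multiset extension of the literal ordering. A constrained clause $(C;\pi)$ is redundant in a set $N$ of constrained clauses if for every $D\in\mathrm{ground}((C;\pi))$ there are $D_1,\dots,D_n\in\mathrm{ground}(N)$ with each $D_i\prec D$ and $D_1,\dots,D_n\models D$. A constrained clause $(C';\pi')$ is a condensation of $(C;\pi)$ if $C'\subset C$ and there is a substitution $\sigma$ such that $\pi\sigma=\pi'$, $\pi'\subseteq\pi$, and for every literal $L\in C$ there is $L'\in C'$ with $L\sigma=L'$. *)

theory Defs
  imports Main "HOL-Library.Multiset"
begin

datatype ('f, 'v) trm = is_Var: Var 'v | Fun 'f "('f, 'v) trm list"

fun vars_trm :: "('f, 'v) trm \<Rightarrow> 'v set" where
  "vars_trm (Var x) = {x}"
| "vars_trm (Fun f ts) = (\<Union>t\<in>set ts. vars_trm t)"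

definition ground_trm :: "('f, 'v) trm \<Rightarrow> bool" where
  "ground_trm t \<longleftrightarrow> vars_trm t = {}"

type_synonym ('f, 'v) subst = "'v \<Rightarrow> ('f, 'v) trm"

fun subst_trm :: "('f, 'v) trm \<Rightarrow> ('f, 'v) subst \<Rightarrow> ('f, 'v) trm" where
  "subst_trm (Var x) \<sigma> = \<sigma> x"
| "subst_trm (Fun f ts) \<sigma> = Fun f (map (\<lambda>t. subst_trm t \<sigma>) ts)"

fun straight :: "('f, 'v) trm \<Rightarrow> bool" where
  "straight (Var x) = True"
| "straight (Fun f ss) =
     (distinct (filter is_Var ss)
      \<and> length (filter (\<lambda>s. \<not> is_Var s) ss) \<le> 1
      \<and> (\<forall>s\<in>set ss. \<not> is_Var s \<longrightarrow> straight s))"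

datatype ('p, 'f, 'v) atm = Atm 'p "('f, 'v) trm list"

definition vars_atm :: "('p, 'f, 'v) atm \<Rightarrow> 'v set" where
  "vars_atm A = (case A of Atm p ts \<Rightarrow> \<Union>t\<in>set ts. vars_trm t)"

definition ground_atm :: "('p, 'f, 'v) atm \<Rightarrow> bool" where
  "ground_atm A \<longleftrightarrow> vars_atm A = {}"

definition subst_atm :: "('p, 'f, 'v) atm \<Rightarrow> ('f, 'v) subst \<Rightarrow> ('p, 'f, 'v) atm" where
  "subst_atm A \<sigma> = (case A of Atm p ts \<Rightarrow> Atm p (map (\<lambda>t. subst_trm t \<sigma>) ts))"

datatype ('p, 'f, 'v) lit = Pos "('p, 'f, 'v) atm" | Neg "('p, 'f, 'v) atm"

fun atm_of_lit :: "('p, 'f, 'v) lit \<Rightarrow> ('p, 'f, 'v) atm" where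
  "atm_of_lit (Pos A) = A"
| "atm_of_lit (Neg A) = A"

fun subst_lit :: "('p, 'f, 'v) lit \<Rightarrow> ('f, 'v) subst \<Rightarrow> ('p, 'f, 'v) lit" where
  "subst_lit (Pos A) \<sigma> = Pos (subst_atm A \<sigma>)"
| "subst_lit (Neg A) \<sigma> = Neg (subst_atm A \<sigma>)"

type_synonym ('p, 'f, 'v) clause = "('p, 'f, 'v) lit multiset"

definition vars_clause :: "('p, 'f, 'v) clause \<Rightarrow> 'v set" where
  "vars_clause C = (\<Union>L\<in>set_mset C. vars_atm (atm_of_lit L))"

definition subst_clause :: "('p, 'f, 'v) clause \<Rightarrow> ('f, 'v) subst \<Rightarrow> ('p, 'f, 'v) clause" where
  "subst_clause C \<sigma> = image_mset (\<lambda>L. subst_lit L \<sigma>) C"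

text \<open>A constraint is a finite conjunction of disequations t \<noteq> s, represented as the
  finite set of pairs (t, s).\<close>
type_synonym ('f, 'v) constr = "(('f, 'v) trm \<times> ('f, 'v) trm) set"

definition wf_constr :: "('f, 'v) constr \<Rightarrow> bool" where
  "wf_constr \<pi> \<longleftrightarrow> finite \<pi> \<and>
     (\<forall>(t, s)\<in>\<pi>. straight s \<and> vars_trm t \<inter> vars_trm s = {})"

definition subst_constr :: "('f, 'v) constr \<Rightarrow> ('f, 'v) subst \<Rightarrow> ('f, 'v) constr" where
  "subst_constr \<pi> \<sigma> = (\<lambda>(t, s). (subst_trm t \<sigma>, s)) ` \<pi>"

definition vars_lhs_constr :: "('f, 'v) constr \<Rightarrow> 'v set" where
  "vars_lhs_constr \<pi> = (\<Union>(t, s)\<in>\<pi>. vars_trm t)"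

definition is_instance :: "('f, 'v) trm \<Rightarrow> ('f, 'v) trm \<Rightarrow> bool" where
  "is_instance t s \<longleftrightarrow> (\<exists>\<tau>. t = subst_trm s \<tau>)"

definition is_solution :: "('f, 'v) subst \<Rightarrow> ('f, 'v) constr \<Rightarrow> bool" where
  "is_solution \<delta> \<pi> \<longleftrightarrow>
     (\<forall>(t, s)\<in>\<pi>. ground_trm (subst_trm t \<delta>) \<and> \<not> is_instance (subst_trm t \<delta>) s)"

type_synonym ('p, 'f, 'v) cclause = "('p, 'f, 'v) clause \<times> ('f, 'v) constr"

definition ground_insts :: "('p, 'f, 'v) cclause \<Rightarrow> ('p, 'f, 'v) clause set" where
  "ground_insts Cp = (case Cp of (C, \<pi>) \<Rightarrow>
     {subst_clause C \<delta> | \<delta>. is_solution \<delta> \<pi>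
        \<and> (\<forall>x \<in> vars_clause C \<union> vars_lhs_constr \<pi>. ground_trm (\<delta> x))})"

definition ground_set :: "('p, 'f, 'v) cclause set \<Rightarrow> ('p, 'f, 'v) clause set" where
  "ground_set N = (\<Union>Cp\<in>N. ground_insts Cp)"

definition herbrand_interp :: "('p, 'f, 'v) atm set \<Rightarrow> bool" where
  "herbrand_interp I \<longleftrightarrow> (\<forall>A\<in>I. ground_atm A)"

definition sat_ground :: "('p, 'f, 'v) atm set \<Rightarrow> ('p, 'f, 'v) clause \<Rightarrow> bool" where
  "sat_ground I C \<longleftrightarrow>
     {A. Pos A \<in># C} \<inter> I \<noteq> {} \<or> \<not> {A. Neg A \<in># C} \<subseteq> I"

definition sat_cclause :: "('p, 'f, 'v) atm set \<Rightarrow> ('p, 'f, 'v) cclause \<Rightarrow> bool" where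
  "sat_cclause I Cp \<longleftrightarrow> (\<forall>D\<in>ground_insts Cp. sat_ground I D)"

definition entails_cc :: "('p, 'f, 'v) cclause \<Rightarrow> ('p, 'f, 'v) cclause \<Rightarrow> bool" where
  "entails_cc Cp Dp \<longleftrightarrow>
     (\<forall>I. herbrand_interp I \<longrightarrow> sat_cclause I Cp \<longrightarrow> sat_cclause I Dp)"

definition entails_ground :: "('p, 'f, 'v) clause set \<Rightarrow> ('p, 'f, 'v) clause \<Rightarrow> bool" where
  "entails_ground Ds D \<longleftrightarrow>
     (\<forall>I. herbrand_interp I \<longrightarrow> (\<forall>D'\<in>Ds. sat_ground I D') \<longrightarrow> sat_ground I D)"

text \<open>(A, B) \<in> R means A \<prec> B. An atom ordering is an irreflexive, transitive,
  well-founded ordering that is total on ground atoms (and relates only ground atoms).\<close>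
definition atom_ordering :: "(('p, 'f, 'v) atm \<times> ('p, 'f, 'v) atm) set \<Rightarrow> bool" where
  "atom_ordering R \<longleftrightarrow>
     (\<forall>(A, B)\<in>R. ground_atm A \<and> ground_atm B)
     \<and> irrefl R \<and> trans R \<and> wf R \<and> total_on {A. ground_atm A} R"

fun lit_mset :: "('p, 'f, 'v) lit \<Rightarrow> ('p, 'f, 'v) atm multiset" where
  "lit_mset (Pos A) = {#A#}"
| "lit_mset (Neg A) = {#A, A#}"

definition lit_ord :: "(('p, 'f, 'v) atm \<times> ('p, 'f, 'v) atm) set
    \<Rightarrow> (('p, 'f, 'v) lit \<times> ('p, 'f, 'v) lit) set" where
  "lit_ord R = {(L1, L2). (lit_mset L1, lit_mset L2) \<in> mult R}"

definition clause_ord :: "(('p, 'f, 'v) atm \<times> ('p, 'f, 'v) atm) set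
    \<Rightarrow> (('p, 'f, 'v) clause \<times> ('p, 'f, 'v) clause) set" where
  "clause_ord R = mult (lit_ord R)"

definition redundant :: "(('p, 'f, 'v) atm \<times> ('p, 'f, 'v) atm) set
    \<Rightarrow> ('p, 'f, 'v) cclause \<Rightarrow> ('p, 'f, 'v) cclause set \<Rightarrow> bool" where
  "redundant R Cp N \<longleftrightarrow>
     (\<forall>D\<in>ground_insts Cp. \<exists>Ds. finite Ds \<and> Ds \<subseteq> ground_set N
        \<and> (\<forall>D'\<in>Ds. (D', D) \<in> clause_ord R) \<and> entails_ground Ds D)"

definition condensation :: "('p, 'f, 'v) cclause \<Rightarrow> ('p, 'f, 'v) cclause \<Rightarrow> bool" where
  "condensation Cp' Cp \<longleftrightarrow> (case Cp' of (C', \<pi>') \<Rightarrow> case Cp of (C, \<pi>) \<Rightarrow>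
     C' \<subset># C \<and>
     (\<exists>\<sigma>. subst_constr \<pi> \<sigma> = \<pi>' \<and> \<pi>' \<subseteq> \<pi>
          \<and> (\<forall>L\<in>#C. \<exists>L'\<in>#C'. subst_lit L \<sigma> = L')))"

end

theory Submission
  imports Defs
begin

text \<open>If \<open>C\<sigma>\<close> uses only literals of \<open>C'\<close> and \<open>\<pi>\<sigma> = \<pi>'\<close>, then every ground instance
  \<open>C'\<delta>\<close> of \<open>(C'; \<pi>')\<close> contains the literals of \<open>C(\<sigma>\<delta>)\<close>, a ground instance of \<open>(C; \<pi>)\<close>;
  so \<open>(C; \<pi>)\<close> entails \<open>(C'; \<pi>')\<close>. Conversely \<open>C' \<subset># C\<close> and \<open>\<pi>' \<subseteq> \<pi>\<close> make \<open>C'\<delta>\<close> a ground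
  instance of \<open>(C'; \<pi>')\<close> for every ground instance \<open>C\<delta>\<close> of \<open>(C; \<pi>)\<close>; it is a proper
  sub-multiset of \<open>C\<delta>\<close>, hence smaller in the multiset extension of any ordering, and it
  entails \<open>C\<delta>\<close>, which gives redundancy.\<close>

definition subst_comp :: "('f, 'v) subst \<Rightarrow> ('f, 'v) subst \<Rightarrow> ('f, 'v) subst" where
  "subst_comp \<sigma> \<delta> = (\<lambda>x. subst_trm (\<sigma> x) \<delta>)"

lemma subst_trm_comp: "subst_trm (subst_trm t \<sigma>) \<delta> = subst_trm t (subst_comp \<sigma> \<delta>)"
  by (induction t) (auto simp: subst_comp_def)

lemma subst_lit_comp: "subst_lit (subst_lit L \<sigma>) \<delta> = subst_lit L (subst_comp \<sigma> \<delta>)"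
proof -
  have "subst_atm (subst_atm A \<sigma>) \<delta> = subst_atm A (subst_comp \<sigma> \<delta>)" for A
    by (cases A) (simp add: subst_atm_def subst_trm_comp)
  then show ?thesis
    by (cases L) simp_all
qed

lemma subst_clause_comp:
  "subst_clause (subst_clause C \<sigma>) \<delta> = subst_clause C (subst_comp \<sigma> \<delta>)"
  by (simp add: subst_clause_def image_mset.compositionality comp_def subst_lit_comp)

lemma vars_subst_trm: "vars_trm (subst_trm t \<sigma>) = (\<Union>x\<in>vars_trm t. vars_trm (\<sigma> x))"
  by (induction t) auto

lemma vars_subst_clause:
  "vars_clause (subst_clause C \<sigma>) = (\<Union>x\<in>vars_clause C. vars_trm (\<sigma> x))"
proof -
  have "vars_atm (atm_of_lit (subst_lit L \<sigma>)) = (\<Union>x\<in>vars_atm (atm_of_lit L). vars_trm (\<sigma> x))"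
    for L
    by (cases L; cases "atm_of_lit L")
      (auto simp: subst_atm_def vars_atm_def vars_subst_trm)
  then show ?thesis
    unfolding vars_clause_def subst_clause_def by auto
qed

lemma vars_lhs_subst_constr:
  "vars_lhs_constr (subst_constr \<pi> \<sigma>) = (\<Union>x\<in>vars_lhs_constr \<pi>. vars_trm (\<sigma> x))"
  unfolding vars_lhs_constr_def subst_constr_def by (force simp: vars_subst_trm)

lemma vars_clause_mono: "set_mset C \<subseteq> set_mset C' \<Longrightarrow> vars_clause C \<subseteq> vars_clause C'"
  unfolding vars_clause_def by blast

lemma vars_lhs_constr_mono: "\<pi> \<subseteq> \<pi>' \<Longrightarrow> vars_lhs_constr \<pi> \<subseteq> vars_lhs_constr \<pi>'"
  unfolding vars_lhs_constr_def by blast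

lemma ground_trm_subst_iff:
  "ground_trm (subst_trm t \<delta>) \<longleftrightarrow> (\<forall>x\<in>vars_trm t. ground_trm (\<delta> x))"
  unfolding ground_trm_def by (auto simp: vars_subst_trm)

lemma is_solution_comp_iff:
  "is_solution (subst_comp \<sigma> \<delta>) \<pi> \<longleftrightarrow> is_solution \<delta> (subst_constr \<pi> \<sigma>)"
  unfolding is_solution_def subst_constr_def by (auto simp: subst_trm_comp)

lemma is_solution_mono: "is_solution \<delta> \<pi>' \<Longrightarrow> \<pi> \<subseteq> \<pi>' \<Longrightarrow> is_solution \<delta> \<pi>"
  unfolding is_solution_def by blast

definition grounding_solution ::
    "('f, 'v) subst \<Rightarrow> ('p, 'f, 'v) clause \<Rightarrow> ('f, 'v) constr \<Rightarrow> bool" where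
  "grounding_solution \<delta> C \<pi> \<longleftrightarrow>
     is_solution \<delta> \<pi> \<and> (\<forall>x \<in> vars_clause C \<union> vars_lhs_constr \<pi>. ground_trm (\<delta> x))"

lemma ground_insts_iff:
  "D \<in> ground_insts (C, \<pi>) \<longleftrightarrow> (\<exists>\<delta>. D = subst_clause C \<delta> \<and> grounding_solution \<delta> C \<pi>)"
  unfolding ground_insts_def grounding_solution_def by auto

lemma grounding_solution_comp_iff:
  "grounding_solution (subst_comp \<sigma> \<delta>) C \<pi>
     \<longleftrightarrow> grounding_solution \<delta> (subst_clause C \<sigma>) (subst_constr \<pi> \<sigma>)"
proof -
  have "ground_trm (subst_comp \<sigma> \<delta> x) \<longleftrightarrow> (\<forall>y\<in>vars_trm (\<sigma> x). ground_trm (\<delta> y))" for x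
    by (simp add: subst_comp_def ground_trm_subst_iff)
  then show ?thesis
    unfolding grounding_solution_def
    by (auto simp: is_solution_comp_iff vars_subst_clause vars_lhs_subst_constr)
qed

lemma grounding_solution_mono:
  assumes "grounding_solution \<delta> C' \<pi>'" "set_mset C \<subseteq> set_mset C'" "\<pi> \<subseteq> \<pi>'"
  shows "grounding_solution \<delta> C \<pi>"
  using assms vars_clause_mono[OF assms(2)] vars_lhs_constr_mono[OF assms(3)]
  unfolding grounding_solution_def by (blast intro: is_solution_mono)

lemma ground_insts_subst_subset:
  "ground_insts (subst_clause C \<sigma>, subst_constr \<pi> \<sigma>) \<subseteq> ground_insts (C, \<pi>)"
  by (auto simp: ground_insts_iff subst_clause_comp simp flip: grounding_solution_comp_iff)

lemma sat_ground_mono: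
  "sat_ground I D \<Longrightarrow> set_mset D \<subseteq> set_mset D' \<Longrightarrow> sat_ground I D'"
  unfolding sat_ground_def by blast

lemma entails_cc_if_subsumes:
  assumes lits: "set_mset (subst_clause C \<sigma>) \<subseteq> set_mset C'"
    and constr: "subst_constr \<pi> \<sigma> = \<pi>'"
  shows "entails_cc (C, \<pi>) (C', \<pi>')"
  unfolding entails_cc_def sat_cclause_def
proof (intro allI impI ballI)
  fix I D
  assume sat: "\<forall>E\<in>ground_insts (C, \<pi>). sat_ground I E" and "D \<in> ground_insts (C', \<pi>')"
  then obtain \<delta> where D: "D = subst_clause C' \<delta>" and \<delta>: "grounding_solution \<delta> C' \<pi>'"
    by (auto simp: ground_insts_iff)
  have "grounding_solution \<delta> (subst_clause C \<sigma>) (subst_constr \<pi> \<sigma>)"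
    using grounding_solution_mono[OF \<delta> lits] constr by simp
  then have "subst_clause (subst_clause C \<sigma>) \<delta> \<in> ground_insts (C, \<pi>)"
    using ground_insts_subst_subset by (fastforce simp: ground_insts_iff)
  moreover have "set_mset (subst_clause (subst_clause C \<sigma>) \<delta>) \<subseteq> set_mset D"
    using lits unfolding D subst_clause_def by auto
  ultimately show "sat_ground I D"
    using sat sat_ground_mono by blast
qed

lemma redundant_if_strict_submset:
  assumes sub: "C' \<subset># C" and constr: "\<pi>' \<subseteq> \<pi>"
  shows "redundant R (C, \<pi>) {(C', \<pi>')}"
  unfolding redundant_def
proof
  fix D assume "D \<in> ground_insts (C, \<pi>)"
  then obtain \<delta> where D: "D = subst_clause C \<delta>" and \<delta>: "grounding_solution \<delta> C \<pi>"
    by (auto simp: ground_insts_iff)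
  define D' where "D' = subst_clause C' \<delta>"
  have "grounding_solution \<delta> C' \<pi>'"
    using grounding_solution_mono[OF \<delta> _ constr] sub
    by (simp add: set_mset_mono subset_mset.less_imp_le)
  then have "D' \<in> ground_set {(C', \<pi>')}"
    by (auto simp: ground_set_def ground_insts_iff D'_def)
  moreover have "D' \<subset># D"
    using sub unfolding D D'_def subst_clause_def by (rule image_mset_subset_mono)
  then have "(D', D) \<in> clause_ord R" and "entails_ground {D'} D"
    using sat_ground_mono[OF _ set_mset_mono[OF subset_mset.less_imp_le]]
    by (auto simp: clause_ord_def entails_ground_def subset_implies_mult)
  ultimately show "\<exists>Ds. finite Ds \<and> Ds \<subseteq> ground_set {(C', \<pi>')}
      \<and> (\<forall>D'\<in>Ds. (D', D) \<in> clause_ord R) \<and> entails_ground Ds D"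
    by (intro exI[of _ "{D'}"]) auto
qed

theorem lemma2:
  fixes C C' :: "('p, 'f, 'v) clause"
    and \<pi> \<pi>' :: "('f, 'v) constr"
    and R :: "(('p, 'f, 'v) atm \<times> ('p, 'f, 'v) atm) set"
  assumes "wf_constr \<pi>"
    and "wf_constr \<pi>'"
    and "condensation (C', \<pi>') (C, \<pi>)"
    and "atom_ordering R"
  shows "entails_cc (C, \<pi>) (C', \<pi>') \<and> redundant R (C, \<pi>) {(C', \<pi>')}"
proof
  from assms(3) obtain \<sigma> where sub: "C' \<subset># C" and constr: "subst_constr \<pi> \<sigma> = \<pi>'"
    and constr_sub: "\<pi>' \<subseteq> \<pi>" and lits: "\<forall>L\<in>#C. \<exists>L'\<in>#C'. subst_lit L \<sigma> = L'"
    unfolding condensation_def by auto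
  from lits have "set_mset (subst_clause C \<sigma>) \<subseteq> set_mset C'"
    unfolding subst_clause_def by auto
  then show "entails_cc (C, \<pi>) (C', \<pi>')"
    using constr by (rule entails_cc_if_subsumes)
  show "redundant R (C, \<pi>) {(C', \<pi>')}"
    using sub constr_sub by (rule redundant_if_strict_submset)
qed

end
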